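(* Let $J$ be a countable set and $\mathcal{A}$ the (non-unital) algebra of functions $f:J\to\mathbb{R}$ with $f(i)=0$ for all but finitely many $i\in J$, with pointwise operations; for $i\in J$ let $e_i$ be the characteristic function of $\{i\}$. Let $\sigma:J\to J$ be a bijection and $\tilde{\sigma}:\mathcal{A}\to\mathcal{A}$, $\tilde{\sigma}(f)=f\circ\sigma^{-1}$. An $\mathbb{R}$-linear map $\Delta:\mathcal{A}\to\mathcal{A}$ is a $\tilde{\sigma}$-derivation if and only if for every $i\in J$: (1) $\Delta(e_i)(\sigma(i))=-\Delta(e_{\sigma(i)})(\sigma(i))$, and (2) $\Delta(e_i)(k)=0$ for all $k\notin\{i,\sigma(i)\}$.
   Context: A $\tilde{\sigma}$-derivation is an $\mathbb{R}$-linear map $\Delta:\mathcal{A}\to\mathcal{A}$ with $\Delta(fg)=\tilde{\sigma}(f)\Delta(g)+\Delta(f)g$ for all $f,g\in\mathcal{A}$. *)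

theory Defs
  imports Complex_Main "HOL-Library.Countable"
begin

definition fin_supp :: "('j \<Rightarrow> real) set" where
  "fin_supp = {f. finite {i. f i \<noteq> 0}}"

definition char_fun :: "'j \<Rightarrow> 'j \<Rightarrow> real" where
  "char_fun i = (\<lambda>k. if k = i then 1 else 0)"

definition sigma_tilde :: "('j \<Rightarrow> 'j) \<Rightarrow> ('j \<Rightarrow> real) \<Rightarrow> ('j \<Rightarrow> real)" where
  "sigma_tilde \<sigma> f = f \<circ> inv \<sigma>"

definition linear_on_A :: "(('j \<Rightarrow> real) \<Rightarrow> ('j \<Rightarrow> real)) \<Rightarrow> bool" where
  "linear_on_A D \<longleftrightarrow> (\<forall>f\<in>fin_supp. D f \<in> fin_supp)
     \<and> (\<forall>f\<in>fin_supp. \<forall>g\<in>fin_supp. D (\<lambda>k. f k + g k) = (\<lambda>k. D f k + D g k))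
     \<and> (\<forall>c::real. \<forall>f\<in>fin_supp. D (\<lambda>k. c * f k) = (\<lambda>k. c * D f k))"

definition sigma_derivation :: "('j \<Rightarrow> 'j) \<Rightarrow> (('j \<Rightarrow> real) \<Rightarrow> ('j \<Rightarrow> real)) \<Rightarrow> bool" where
  "sigma_derivation \<sigma> D \<longleftrightarrow> linear_on_A D \<and>
     (\<forall>f\<in>fin_supp. \<forall>g\<in>fin_supp. D (\<lambda>k. f k * g k) = (\<lambda>k. sigma_tilde \<sigma> f k * D g k + D f k * g k))"

end

theory Submission
  imports Defs
begin

text \<open>By linearity, \<open>\<Delta>\<close> is determined by its values \<open>\<Delta>(e\<^sub>i)(k)\<close>. Multiplying
  \<open>e\<^sub>i e\<^sub>k = 0\<close> for \<open>i \<noteq> k\<close> and \<open>e\<^sub>i\<^sup>2 = e\<^sub>i\<close> through the twisted Leibniz rule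
  forces conditions (1) and (2). Conversely, under (1) and (2) every \<open>\<Delta>(f)(m)\<close>
  collapses to \<open>(f(m) - f(p)) \<Delta>(e\<^sub>m)(m)\<close> with \<open>p = \<sigma>\<^sup>-\<^sup>1 m\<close>, a twisted difference
  operator, and the Leibniz rule for such operators is the identity
  \<open>f(m)g(m) - f(p)g(p) = f(p)(g(m) - g(p)) + (f(m) - f(p))g(m)\<close>.\<close>

definition sigma_basis_conditions ::
  "('j \<Rightarrow> 'j) \<Rightarrow> (('j \<Rightarrow> real) \<Rightarrow> ('j \<Rightarrow> real)) \<Rightarrow> bool" where
  "sigma_basis_conditions \<sigma> D \<longleftrightarrow>
    (\<forall>i. D (char_fun i) (\<sigma> i) = - D (char_fun (\<sigma> i)) (\<sigma> i)
       \<and> (\<forall>k. k \<notin> {i, \<sigma> i} \<longrightarrow> D (char_fun i) k = 0))"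

lemma char_fun_in_fin_supp [simp]: "char_fun i \<in> fin_supp"
  by (simp add: fin_supp_def char_fun_def)

lemma fin_supp_mult: "f \<in> fin_supp \<Longrightarrow> (\<lambda>k. f k * g k) \<in> fin_supp"
  unfolding fin_supp_def by (auto elim: finite_subset[rotated])

lemma fin_supp_scale: "f \<in> fin_supp \<Longrightarrow> (\<lambda>k. c * f k) \<in> fin_supp"
  unfolding fin_supp_def by (auto elim: finite_subset[rotated])

lemma char_fun_mult_char_fun:
  "(\<lambda>m. char_fun i m * char_fun k m) = (if i = k then char_fun i else (\<lambda>m. 0))"
  by (auto simp: char_fun_def fun_eq_iff)

lemma sigma_tilde_char_fun:
  assumes "bij \<sigma>"
  shows "sigma_tilde \<sigma> (char_fun i) = char_fun (\<sigma> i)"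
  using assms by (auto simp: sigma_tilde_def char_fun_def fun_eq_iff
      bij_is_surj surj_f_inv_f bij_is_inj inv_f_f)

lemma linear_on_A_add:
  "linear_on_A D \<Longrightarrow> f \<in> fin_supp \<Longrightarrow> g \<in> fin_supp \<Longrightarrow>
    D (\<lambda>k. f k + g k) = (\<lambda>k. D f k + D g k)"
  unfolding linear_on_A_def by blast

lemma linear_on_A_scale:
  "linear_on_A D \<Longrightarrow> f \<in> fin_supp \<Longrightarrow> D (\<lambda>k. c * f k) = (\<lambda>k. c * D f k)"
  unfolding linear_on_A_def by blast

lemma linear_on_A_zero:
  assumes "linear_on_A D"
  shows "D (\<lambda>k. 0) = (\<lambda>k. 0)"
  using linear_on_A_scale[OF assms, of "\<lambda>k. 0" 0] by (simp add: fin_supp_def)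

lemma linear_on_A_expansion:
  assumes "linear_on_A D" and "finite S" and "{i. f i \<noteq> 0} \<subseteq> S"
  shows "D f m = (\<Sum>i\<in>S. f i * D (char_fun i) m)"
  using assms(2,3)
proof (induction S arbitrary: f rule: finite_induct)
  case empty
  then have "f = (\<lambda>k. 0)" by auto
  then show ?case using linear_on_A_zero[OF assms(1)] by simp
next
  case (insert x S)
  define f' where "f' = f(x := 0)"
  have supp_f': "{i. f' i \<noteq> 0} \<subseteq> S"
    using insert.prems by (auto simp: f'_def)
  then have "f' \<in> fin_supp"
    unfolding fin_supp_def using insert.hyps(1) finite_subset by blast
  then have "D (\<lambda>k. f x * char_fun x k + f' k) m = f x * D (char_fun x) m + D f' m"
    using linear_on_A_add[OF assms(1) fin_supp_scale[OF char_fun_in_fin_supp]]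
      linear_on_A_scale[OF assms(1) char_fun_in_fin_supp]
    by simp
  moreover have "(\<lambda>k. f x * char_fun x k + f' k) = f"
    by (auto simp: fun_eq_iff f'_def char_fun_def)
  ultimately have "D f m = f x * D (char_fun x) m + D f' m"
    by simp
  moreover have "D f' m = (\<Sum>i\<in>S. f i * D (char_fun i) m)"
    unfolding insert.IH[OF supp_f'] using insert.hyps(2)
    by (intro sum.cong) (auto simp: f'_def)
  ultimately show ?case
    using insert.hyps by simp
qed

lemma sigma_derivation_char_fun_off_diag:
  assumes "bij \<sigma>" and "sigma_derivation \<sigma> D" and "k \<noteq> i"
  shows "D (char_fun i) k = - char_fun (\<sigma> i) k * D (char_fun k) k"
proof -
  have "D (\<lambda>m. char_fun i m * char_fun k m)
      = (\<lambda>m. char_fun (\<sigma> i) m * D (char_fun k) m + D (char_fun i) m * char_fun k m)"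
    using assms(2) by (simp add: sigma_derivation_def sigma_tilde_char_fun[OF assms(1)])
  then have "(\<lambda>m. 0) = (\<lambda>m. char_fun (\<sigma> i) m * D (char_fun k) m + D (char_fun i) m * char_fun k m)"
    using assms(2,3) linear_on_A_zero[of D]
    by (simp add: sigma_derivation_def char_fun_mult_char_fun)
  then have "0 = char_fun (\<sigma> i) k * D (char_fun k) k + D (char_fun i) k * char_fun k k"
    by metis
  then show ?thesis by (simp add: char_fun_def)
qed

lemma sigma_derivation_char_fun_fixed_point:
  assumes "bij \<sigma>" and "sigma_derivation \<sigma> D" and "\<sigma> i = i"
  shows "D (char_fun i) i = 0"
proof -
  have "D (\<lambda>m. char_fun i m * char_fun i m)
      = (\<lambda>m. char_fun i m * D (char_fun i) m + D (char_fun i) m * char_fun i m)"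
    using assms(2) by (simp add: sigma_derivation_def sigma_tilde_char_fun[OF assms(1)] assms(3))
  then have "D (char_fun i) = (\<lambda>m. char_fun i m * D (char_fun i) m + D (char_fun i) m * char_fun i m)"
    by (simp add: char_fun_mult_char_fun)
  then have "D (char_fun i) i = char_fun i i * D (char_fun i) i + D (char_fun i) i * char_fun i i"
    by metis
  then show ?thesis by (simp add: char_fun_def)
qed

lemma sigma_derivation_imp_basis_conditions:
  assumes "bij \<sigma>" and "sigma_derivation \<sigma> D"
  shows "sigma_basis_conditions \<sigma> D"
  unfolding sigma_basis_conditions_def
proof (intro allI conjI impI)
  fix i
  show "D (char_fun i) (\<sigma> i) = - D (char_fun (\<sigma> i)) (\<sigma> i)"
  proof (cases "\<sigma> i = i")
    case True
    then show ?thesis using sigma_derivation_char_fun_fixed_point[OF assms] by simp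
  next
    case False
    then show ?thesis
      using sigma_derivation_char_fun_off_diag[OF assms False] by (simp add: char_fun_def)
  qed
next
  fix i k
  assume "k \<notin> {i, \<sigma> i}"
  then show "D (char_fun i) k = 0"
    using sigma_derivation_char_fun_off_diag[OF assms, of k i] by (simp add: char_fun_def)
qed

lemma basis_conditions_difference_form:
  assumes "bij \<sigma>" and "linear_on_A D" and "sigma_basis_conditions \<sigma> D"
    and "f \<in> fin_supp"
  shows "D f m = (f m - f (inv \<sigma> m)) * D (char_fun m) m"
proof -
  define p where "p = inv \<sigma> m"
  have "\<sigma> p = m"
    using assms(1) by (simp add: p_def bij_is_surj surj_f_inv_f)
  then have vanish: "D (char_fun i) m = 0" if "i \<notin> {m, p}" for i
    using assms(1,3) that by (auto simp: sigma_basis_conditions_def bij_def inj_eq)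
  have pair: "D (char_fun p) m = - D (char_fun m) m"
    using assms(3) \<open>\<sigma> p = m\<close> by (auto simp: sigma_basis_conditions_def)
  define S where "S = {i. f i \<noteq> 0} \<union> {m, p}"
  have "finite S"
    using assms(4) by (simp add: S_def fin_supp_def)
  then have "D f m = (\<Sum>i\<in>S. f i * D (char_fun i) m)"
    by (rule linear_on_A_expansion[OF assms(2)]) (auto simp: S_def)
  also have "\<dots> = (\<Sum>i\<in>{m, p}. f i * D (char_fun i) m)"
    using \<open>finite S\<close> vanish by (intro sum.mono_neutral_right) (auto simp: S_def)
  also have "\<dots> = (f m - f p) * D (char_fun m) m"
    using pair by (cases "p = m") (auto simp: algebra_simps)
  finally show ?thesis by (simp add: p_def)
qed

lemma basis_conditions_imp_sigma_derivation:
  fixes \<sigma> :: "'j \<Rightarrow> 'j"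
  assumes "bij \<sigma>" and "linear_on_A D" and "sigma_basis_conditions \<sigma> D"
  shows "sigma_derivation \<sigma> D"
  unfolding sigma_derivation_def
proof (intro conjI ballI assms(2) ext)
  fix f g :: "'j \<Rightarrow> real" and m :: 'j
  assume "f \<in> fin_supp" and "g \<in> fin_supp"
  note difference_form = basis_conditions_difference_form[OF assms, where m = m]
  have "D (\<lambda>k. f k * g k) m
      = f (inv \<sigma> m) * ((g m - g (inv \<sigma> m)) * D (char_fun m) m)
        + (f m - f (inv \<sigma> m)) * D (char_fun m) m * g m"
    unfolding difference_form[OF fin_supp_mult[OF \<open>f \<in> fin_supp\<close>]]
    by (simp add: algebra_simps)
  then show "D (\<lambda>k. f k * g k) m = sigma_tilde \<sigma> f m * D g m + D f m * g m"
    unfolding sigma_tilde_def difference_form[OF \<open>f \<in> fin_supp\<close>]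
      difference_form[OF \<open>g \<in> fin_supp\<close>]
    by simp
qed

theorem theorem6:
  fixes \<sigma> :: "'j::countable \<Rightarrow> 'j"
    and D :: "('j \<Rightarrow> real) \<Rightarrow> ('j \<Rightarrow> real)"
  assumes "bij \<sigma>"
    and "linear_on_A D"
  shows "sigma_derivation \<sigma> D \<longleftrightarrow>
    (\<forall>i. D (char_fun i) (\<sigma> i) = - D (char_fun (\<sigma> i)) (\<sigma> i)
       \<and> (\<forall>k. k \<notin> {i, \<sigma> i} \<longrightarrow> D (char_fun i) k = 0))"
  using sigma_derivation_imp_basis_conditions[OF assms(1)]
    basis_conditions_imp_sigma_derivation[OF assms]
  unfolding sigma_basis_conditions_def by blast

end
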